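(* Let $m,n,c$ be positive integers, let items and categories be as in the context, and for each category $o\in\{1,\ldots,c\}$ let $n_o$ be the number of items in category $o$ (so $\sum_{o}n_o=m$). Let $\eta>0$, $\beta\ge 0$ and put $\lambda=\eta\beta/m$ and $a_l=2n_l+\lambda n_l^2$ for $l=1,\ldots,c$. Consider user vectors $\mathbf{u}_i(t)\in\mathbb{R}^c$, $i=1,\ldots,n$, $t\in\{0,1,2,\ldots\}$, evolving by $$\mathbf{u}_i(t+1)=\Big(\mathbf{I}_c+\frac{\eta\beta}{m}\mathbf{V}\mathbf{V}^T\Big)\mathbf{u}_i(t)$$ (the user dynamics with $\epsilon=0$, $\gamma=1$), where $\mathbf{V}=[\mathbf{v}_1,\ldots,\mathbf{v}_m]$. Fix a time $t$ and suppose there is an index $k\in\{1,\ldots,c\}$ with $\sum_{l\neq k}a_l>0$ such that for every pair of users $(i,j)$, $$u_i^{(k)}(t)\,u_j^{(k)}(t)\ \ge\ \frac{\|\mathbf{u}_i(t)\|_2\,\|\mathbf{u}_j(t)\|_2}{\sqrt{1+\Big(\frac{a_k}{\sum_{l\neq k}a_l}\Big)^2}}.$$ Then: (i) for every pair $(i,j)$, $\mathbf{u}_i(t+1)^T\mathbf{u}_j(t+1)\ge\mathbf{u}_i(t)^T\mathbf{u}_j(t)$; (ii) if moreover $n_k=\max_{o\in\{1,\ldots,c\}}n_o$, then for every pair $(i,j)$ and every positive integer $\tau$, $\mathbf{u}_i(t+\tau)^T\mathbf{u}_j(t+\tau)\ge\mathbf{u}_i(t+\tau-1)^T\mathbf{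u}_j(t+\tau-1)$.
   Context: There are $m$ items and $c$ categories; each item belongs to exactly one category, and the vector of an item $j$ in category $o$ is $\mathbf{v}_j=\mathbf{e}_o\in\mathbb{R}^c$, the $o$-th standard basis vector. $u_i^{(k)}(t)$ denotes the $k$-th coordinate of $\mathbf{u}_i(t)$. $\mathbf{I}_c$ is the $c\times c$ identity. *)

theory Defs
  imports "HOL-Analysis.Analysis"
begin

text \<open>Items are the elements of a finite type 'm (so m = CARD('m)), categories are the
elements of a finite type 'c (so c = CARD('c)); cat j is the category of item j.\<close>

definition item_vec :: "('m \<Rightarrow> 'c::finite) \<Rightarrow> 'm \<Rightarrow> real ^ 'c" where
  "item_vec cat j = axis (cat j) 1"

definition item_matrix :: "('m::finite \<Rightarrow> 'c::finite) \<Rightarrow> real ^ 'm ^ 'c" where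
  "item_matrix cat = (\<chi> a j. item_vec cat j $ a)"

definition ncat :: "('m::finite \<Rightarrow> 'c) \<Rightarrow> 'c \<Rightarrow> nat" where
  "ncat cat q = card {j. cat j = q}"

definition acoef :: "('m::finite \<Rightarrow> 'c) \<Rightarrow> real \<Rightarrow> 'c \<Rightarrow> real" where
  "acoef cat lam l = 2 * real (ncat cat l) + lam * (real (ncat cat l))^2"

end

theory Submission
  imports Defs
begin

text \<open>
  Every item vector is a standard basis vector, so \<open>V V\<^sup>T\<close> is the diagonal matrix of the
  category sizes \<open>n\<^sub>q\<close>: one user step maps \<open>x\<close> to \<open>x'\<close> with \<open>x'\<^sub>q = (1 + \<lambda> n\<^sub>q) x\<^sub>q\<close>, and
  \<open>x' \<bullet> y' - x \<bullet> y = \<lambda> \<Sum>\<^sub>q a\<^sub>q x\<^sub>q y\<^sub>q\<close>.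
  The alignment hypothesis confines \<open>x\<close> and \<open>y\<close> to a cone around \<open>e\<^sub>k\<close> whose opening is chosen
  so that, by Cauchy-Schwarz in the plane spanned by the \<open>k\<close>-th coordinate and the off-axis part,
  the off-axis terms of that sum are at least \<open>- a\<^sub>k x\<^sub>k y\<^sub>k\<close>; hence the sum is nonnegative.
  If \<open>n\<^sub>k\<close> is maximal, coordinate \<open>k\<close> is stretched the most, so the cone is invariant under
  the dynamics and the argument applies at every later time.
\<close>

lemma sum_mult_le_sqrt_sum_squares:
  fixes p q X Y :: real
  shows "p * q + X * Y \<le> sqrt (p\<^sup>2 + X\<^sup>2) * sqrt (q\<^sup>2 + Y\<^sup>2)"
proof -
  have "(p\<^sup>2 + X\<^sup>2) * (q\<^sup>2 + Y\<^sup>2) = (p * q + X * Y)\<^sup>2 + (p * Y - X * q)\<^sup>2"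
    by algebra
  then have "(p * q + X * Y)\<^sup>2 \<le> (p\<^sup>2 + X\<^sup>2) * (q\<^sup>2 + Y\<^sup>2)"
    by simp
  then show ?thesis
    by (simp add: real_le_rsqrt flip: real_sqrt_mult)
qed

lemma sqrt_one_plus_square_le: "0 \<le> r \<Longrightarrow> sqrt (1 + r\<^sup>2) \<le> 1 + r"
  by (rule real_le_lsqrt) (auto simp: power2_sum)

lemma norm_eq_sqrt_component_off_axis:
  fixes x :: "real ^ 'n"
  shows "norm x = sqrt ((x $ k)\<^sup>2 + (norm (x - x $ k *\<^sub>R axis k 1))\<^sup>2)"
proof -
  have "orthogonal (x $ k *\<^sub>R axis k 1) (x - x $ k *\<^sub>R axis k 1)"
    by (simp add: orthogonal_def inner_axis' inner_diff_right)
  from norm_add_Pythagorean[OF this]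
  have "(norm x)\<^sup>2 = (x $ k)\<^sup>2 + (norm (x - x $ k *\<^sub>R axis k 1))\<^sup>2"
    by simp
  then show ?thesis
    by (metis abs_norm_cancel real_sqrt_abs)
qed

lemma weighted_component_products_sum_ge:
  fixes x y :: "real ^ 'n"
  assumes a_nonneg: "\<And>l. l \<in> A \<Longrightarrow> 0 \<le> a l"
  shows "- (\<Sum>l\<in>A. a l) * (norm x * norm y) \<le> (\<Sum>l\<in>A. a l * (x $ l * y $ l))"
proof -
  have "- (a l * (norm x * norm y)) \<le> a l * (x $ l * y $ l)" if "l \<in> A" for l
  proof -
    have "\<bar>x $ l * y $ l\<bar> \<le> norm x * norm y"
      unfolding abs_mult by (intro mult_mono component_le_norm_cart) auto
    then have "- (norm x * norm y) \<le> x $ l * y $ l"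
      by linarith
    then show ?thesis
      using mult_left_mono[OF _ a_nonneg[OF that]] by fastforce
  qed
  then show ?thesis
    by (simp add: sum_distrib_right sum_negf[symmetric] sum_mono)
qed

lemma aligned_weighted_inner_nonneg:
  fixes x y :: "real ^ 'n" and a :: "'n \<Rightarrow> real"
  assumes a_nonneg: "\<And>l. 0 \<le> a l"
    and S_pos: "0 < (\<Sum>l\<in>UNIV - {k}. a l)"
    and aligned: "norm x * norm y / sqrt (1 + (a k / (\<Sum>l\<in>UNIV - {k}. a l))\<^sup>2) \<le> x $ k * y $ k"
  shows "0 \<le> (\<Sum>q\<in>UNIV. a q * (x $ q * y $ q))"
proof -
  define S where "S = (\<Sum>l\<in>UNIV - {k}. a l)"
  define r where "r = a k / S"
  define x' where "x' = x - x $ k *\<^sub>R axis k 1"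
  define y' where "y' = y - y $ k *\<^sub>R axis k 1"
  have "0 < S" "0 \<le> r"
    using S_pos a_nonneg by (simp_all add: S_def r_def)
  have c_pos: "0 < sqrt (1 + r\<^sup>2)"
    by (simp add: add_pos_nonneg)
  have aligned_r: "norm x * norm y / sqrt (1 + r\<^sup>2) \<le> x $ k * y $ k"
    using aligned by (simp add: S_def r_def)
  have pq_nonneg: "0 \<le> x $ k * y $ k"
    using c_pos by (intro order_trans[OF _ aligned_r]) simp
  have "norm x * norm y \<le> sqrt (1 + r\<^sup>2) * (x $ k * y $ k)"
    using aligned_r c_pos by (simp add: pos_divide_le_eq mult.commute)
  also have "\<dots> \<le> (1 + r) * (x $ k * y $ k)"
    using sqrt_one_plus_square_le[OF \<open>0 \<le> r\<close>] pq_nonneg by (rule mult_right_mono)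
  finally have "norm x * norm y \<le> (1 + r) * (x $ k * y $ k)" .
  moreover have "x $ k * y $ k + norm x' * norm y' \<le> norm x * norm y"
    using sum_mult_le_sqrt_sum_squares[of "x $ k" "y $ k" "norm x'" "norm y'"]
    by (simp add: x'_def y'_def flip: norm_eq_sqrt_component_off_axis)
  ultimately have "norm x' * norm y' \<le> r * (x $ k * y $ k)"
    by (simp add: algebra_simps)
  then have off_axis_le: "S * (norm x' * norm y') \<le> a k * (x $ k * y $ k)"
    using \<open>0 < S\<close> mult_left_mono[of _ _ S] by (fastforce simp: r_def)
  have "- S * (norm x' * norm y') \<le> (\<Sum>l\<in>UNIV - {k}. a l * (x $ l * y $ l))"
  proof -
    have "(\<Sum>l\<in>UNIV - {k}. a l * (x' $ l * y' $ l)) = (\<Sum>l\<in>UNIV - {k}. a l * (x $ l * y $ l))"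
      by (intro sum.cong) (auto simp: x'_def y'_def axis_def)
    then show ?thesis
      using weighted_component_products_sum_ge[of "UNIV - {k}" a x' y'] a_nonneg
      by (simp add: S_def)
  qed
  moreover have "(\<Sum>q\<in>UNIV. a q * (x $ q * y $ q))
      = a k * (x $ k * y $ k) + (\<Sum>l\<in>UNIV - {k}. a l * (x $ l * y $ l))"
    by (subst sum.remove[of UNIV k]) auto
  ultimately show ?thesis
    using off_axis_le by linarith
qed

lemma norm_power2_cart: "(norm x)\<^sup>2 = (\<Sum>q\<in>UNIV. (x $ q)\<^sup>2)"
  unfolding power2_norm_eq_inner by (simp add: inner_vec_def power2_eq_square)

lemma norm_diagonal_scale_le:
  fixes x x' :: "real ^ 'n"
  assumes d_le: "\<And>q. \<bar>d q\<bar> \<le> D" and x': "\<And>q. x' $ q = d q * x $ q"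
  shows "norm x' \<le> D * norm x"
proof -
  have "0 \<le> D"
    using d_le order_trans abs_ge_zero by blast
  have "(norm x')\<^sup>2 = (\<Sum>q\<in>UNIV. (d q)\<^sup>2 * (x $ q)\<^sup>2)"
    by (simp add: norm_power2_cart x' power_mult_distrib)
  also have "\<dots> \<le> (\<Sum>q\<in>UNIV. D\<^sup>2 * (x $ q)\<^sup>2)"
    using d_le \<open>0 \<le> D\<close> by (intro sum_mono mult_right_mono) (auto simp flip: abs_le_square_iff)
  also have "\<dots> = (D * norm x)\<^sup>2"
    by (simp add: norm_power2_cart power_mult_distrib sum_distrib_left)
  finally show ?thesis
    by (rule power2_le_imp_le) (simp add: \<open>0 \<le> D\<close>)
qed

lemma alignment_diagonal_scale:
  fixes x y x' y' :: "real ^ 'n"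
  assumes d_le: "\<And>q. \<bar>d q\<bar> \<le> d k"
    and x': "\<And>q. x' $ q = d q * x $ q" and y': "\<And>q. y' $ q = d q * y $ q"
    and "0 \<le> c"
    and aligned: "norm x * norm y / c \<le> x $ k * y $ k"
  shows "norm x' * norm y' / c \<le> x' $ k * y' $ k"
proof -
  have "0 \<le> d k"
    using d_le order_trans abs_ge_zero by blast
  have "norm x' * norm y' \<le> (d k * norm x) * (d k * norm y)"
    using norm_diagonal_scale_le[OF d_le x'] norm_diagonal_scale_le[OF d_le y'] \<open>0 \<le> d k\<close>
    by (intro mult_mono) auto
  then have "norm x' * norm y' / c \<le> (d k)\<^sup>2 * (norm x * norm y / c)"
    using \<open>0 \<le> c\<close> by (simp add: divide_right_mono power2_eq_square mult_ac)
  also have "\<dots> \<le> (d k)\<^sup>2 * (x $ k * y $ k)"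
    using aligned by (rule mult_left_mono) simp
  also have "\<dots> = x' $ k * y' $ k"
    by (simp add: x' y' power2_eq_square)
  finally show ?thesis .
qed

lemma alignment_diagonal_iterates:
  fixes x y :: "nat \<Rightarrow> real ^ 'n"
  assumes d_le: "\<And>q. \<bar>d q\<bar> \<le> d k"
    and x: "\<And>s q. x (Suc s) $ q = d q * x s $ q" and y: "\<And>s q. y (Suc s) $ q = d q * y s $ q"
    and "0 \<le> c"
    and aligned: "norm (x 0) * norm (y 0) / c \<le> x 0 $ k * y 0 $ k"
  shows "norm (x s) * norm (y s) / c \<le> x s $ k * y s $ k"
proof (induction s)
  case 0
  show ?case using aligned .
next
  case (Suc s)
  show ?case
    using alignment_diagonal_scale[OF d_le x y \<open>0 \<le> c\<close> Suc.IH] .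
qed

definition user_step_matrix :: "('m::finite \<Rightarrow> 'c::finite) \<Rightarrow> real \<Rightarrow> real ^ 'c ^ 'c" where
  "user_step_matrix cat L = mat 1 + L *\<^sub>R (item_matrix cat ** transpose (item_matrix cat))"

lemma item_matrix_mult_transpose:
  "(item_matrix cat ** transpose (item_matrix cat)) $ a $ b = (if a = b then real (ncat cat a) else 0)"
proof -
  have "(item_matrix cat ** transpose (item_matrix cat)) $ a $ b
      = (\<Sum>j\<in>UNIV. if cat j = a \<and> cat j = b then 1 else 0)"
    unfolding matrix_matrix_mult_def item_matrix_def transpose_def item_vec_def
    by (auto simp: axis_def intro!: sum.cong)
  also have "\<dots> = (if a = b then real (ncat cat a) else 0)"
    unfolding ncat_def by (auto simp: sum.If_cases)
  finally show ?thesis .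
qed

lemma user_step_matrix_component:
  "(user_step_matrix cat L *v x) $ q = (1 + L * real (ncat cat q)) * x $ q"
proof -
  have "(user_step_matrix cat L *v x) $ q
      = (\<Sum>j\<in>UNIV. (if q = j then 1 + L * real (ncat cat q) else 0) * x $ j)"
    unfolding matrix_vector_mult_def user_step_matrix_def vec_lambda_beta
    by (intro sum.cong) (auto simp: mat_def item_matrix_mult_transpose)
  also have "\<dots> = (1 + L * real (ncat cat q)) * x $ q"
    by (simp add: if_distrib[of "\<lambda>z. z * _"] cong: if_cong)
  finally show ?thesis .
qed

lemma inner_user_step_diff:
  "(user_step_matrix cat L *v x) \<bullet> (user_step_matrix cat L *v y) - x \<bullet> y
     = L * (\<Sum>q\<in>UNIV. acoef cat L q * (x $ q * y $ q))"
proof -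
  have "(user_step_matrix cat L *v x) \<bullet> (user_step_matrix cat L *v y) - x \<bullet> y
      = (\<Sum>q\<in>UNIV. ((1 + L * real (ncat cat q)) * x $ q) * ((1 + L * real (ncat cat q)) * y $ q)
                     - x $ q * y $ q)"
    by (simp add: inner_vec_def user_step_matrix_component sum_subtractf)
  also have "\<dots> = (\<Sum>q\<in>UNIV. L * (acoef cat L q * (x $ q * y $ q)))"
    by (intro sum.cong refl) (simp add: acoef_def power2_eq_square algebra_simps)
  finally show ?thesis by (simp add: sum_distrib_left)
qed

lemma acoef_nonneg: "0 \<le> L \<Longrightarrow> 0 \<le> acoef cat L q"
  unfolding acoef_def by simp

lemma user_step_inner_mono:
  assumes "0 \<le> L"
    and S_pos: "0 < (\<Sum>l\<in>UNIV - {k}. acoef cat L l)"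
    and aligned: "norm x * norm y / sqrt (1 + (acoef cat L k / (\<Sum>l\<in>UNIV - {k}. acoef cat L l))\<^sup>2)
                    \<le> x $ k * y $ k"
  shows "x \<bullet> y \<le> (user_step_matrix cat L *v x) \<bullet> (user_step_matrix cat L *v y)"
proof -
  have "0 \<le> (\<Sum>q\<in>UNIV. acoef cat L q * (x $ q * y $ q))"
    using aligned_weighted_inner_nonneg[OF acoef_nonneg[OF \<open>0 \<le> L\<close>] S_pos aligned] .
  then show ?thesis
    using inner_user_step_diff[of cat L x y] \<open>0 \<le> L\<close> by (simp add: algebra_simps)
qed

lemma alignment_user_step_iterates:
  fixes x y :: "nat \<Rightarrow> real ^ 'c::finite" and cat :: "'m::finite \<Rightarrow> 'c"
  assumes "0 \<le> L" and k_max: "\<And>q. ncat cat q \<le> ncat cat k"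
    and x: "\<And>s. x (Suc s) = user_step_matrix cat L *v x s"
    and y: "\<And>s. y (Suc s) = user_step_matrix cat L *v y s"
    and "0 \<le> c"
    and aligned: "norm (x 0) * norm (y 0) / c \<le> x 0 $ k * y 0 $ k"
  shows "norm (x s) * norm (y s) / c \<le> x s $ k * y s $ k"
proof (rule alignment_diagonal_iterates[where d = "\<lambda>q. 1 + L * real (ncat cat q)"])
  show "\<bar>1 + L * real (ncat cat q)\<bar> \<le> 1 + L * real (ncat cat k)" for q
    using \<open>0 \<le> L\<close> k_max by (simp add: mult_left_mono)
  show "x (Suc s) $ q = (1 + L * real (ncat cat q)) * x s $ q"
    and "y (Suc s) $ q = (1 + L * real (ncat cat q)) * y s $ q" for s q
    by (simp_all add: x y user_step_matrix_component)
qed (fact \<open>0 \<le> c\<close> aligned)+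

theorem corollary1:
  fixes cat :: "'m::finite \<Rightarrow> 'c::finite"
    and n :: nat and eta beta :: real
    and u :: "nat \<Rightarrow> nat \<Rightarrow> real ^ 'c"
    and t :: nat and k :: 'c
  assumes n_pos: "0 < n"
    and eta_pos: "0 < eta" and beta_nonneg: "0 \<le> beta"
    and dyn: "\<And>i s. i < n \<Longrightarrow>
       u i (Suc s) = (mat 1 + (eta * beta / real CARD('m)) *\<^sub>R
                       (item_matrix cat ** transpose (item_matrix cat))) *v u i s"
    and sum_pos: "(\<Sum>l\<in>UNIV - {k}. acoef cat (eta * beta / real CARD('m)) l) > 0"
    and align: "\<And>i j. i < n \<Longrightarrow> j < n \<Longrightarrow>
       u i t $ k * u j t $ k \<ge> norm (u i t) * norm (u j t) /
         sqrt (1 + (acoef cat (eta * beta / real CARD('m)) k /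
              (\<Sum>l\<in>UNIV - {k}. acoef cat (eta * beta / real CARD('m)) l))^2)"
  shows "(\<forall>i<n. \<forall>j<n. u i (t + 1) \<bullet> u j (t + 1) \<ge> u i t \<bullet> u j t) \<and>
         (ncat cat k = (MAX q. ncat cat q) \<longrightarrow>
           (\<forall>i<n. \<forall>j<n. \<forall>\<tau>::nat. 0 < \<tau> \<longrightarrow>
              u i (t + \<tau>) \<bullet> u j (t + \<tau>) \<ge> u i (t + \<tau> - 1) \<bullet> u j (t + \<tau> - 1)))"
proof -
  define L where "L = eta * beta / real CARD('m)"
  define c where "c = sqrt (1 + (acoef cat L k / (\<Sum>l\<in>UNIV - {k}. acoef cat L l))\<^sup>2)"
  have "0 \<le> L" "0 \<le> c"
    using eta_pos beta_nonneg by (simp_all add: L_def c_def)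
  have step: "\<And>s. u i (t + Suc s) = user_step_matrix cat L *v u i (t + s)" if "i < n" for i
    using dyn[OF that] by (simp add: user_step_matrix_def L_def)
  have mono: "x \<bullet> y \<le> (user_step_matrix cat L *v x) \<bullet> (user_step_matrix cat L *v y)"
    if "norm x * norm y / c \<le> x $ k * y $ k" for x y :: "real ^ 'c"
    using user_step_inner_mono[OF \<open>0 \<le> L\<close>] sum_pos that by (simp add: L_def c_def)
  have aligned_t: "norm (u i t) * norm (u j t) / c \<le> u i t $ k * u j t $ k" if "i < n" "j < n" for i j
    using align[OF that] by (simp add: L_def c_def)
  have aligned_later: "norm (u i (t + s)) * norm (u j (t + s)) / c \<le> u i (t + s) $ k * u j (t + s) $ k"
    if "ncat cat k = (MAX q. ncat cat q)" "i < n" "j < n" for i j s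
    using alignment_user_step_iterates[where x = "\<lambda>s. u i (t + s)" and y = "\<lambda>s. u j (t + s)",
        OF \<open>0 \<le> L\<close> _ step[OF \<open>i < n\<close>] step[OF \<open>j < n\<close>] \<open>0 \<le> c\<close>] aligned_t that
    by simp
  show ?thesis
    using mono aligned_t aligned_later step step[where s = 0] by (auto simp: gr0_conv_Suc)
qed

end
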